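(* Let $1\le r\le s\le t$ and let $u=ABCd$, $v=A'B'C'd'$ be vertices of $E3C(r,s,t)$ with $A\ne A'$, $B=B'$, $C=C'$ and $d\ne d'$. Then there exist $2r+2$ pairwise internally disjoint $u$–$v$ paths in $E3C(r,s,t)$, each of length at most $r+8$ if $\{d,d'\}=\{0,1\}$, and each of length at most $r+6$ if $\{d,d'\}=\{0,2\}$ or $\{d,d'\}=\{1,2\}$.
   Context: The exchanged 3-ary $n$-cube $E3C(r,s,t)$ ($r,s,t\ge1$, $n=r+s+t+1$): vertices are strings written $x=ABCd$ with $A\in\{0,1,2\}^r$, $B\in\{0,1,2\}^s$, $C\in\{0,1,2\}^t$, $d\in\{0,1,2\}$. Two distinct vertices $x=ABCd$, $y=A'B'C'd'$ are adjacent iff one of: (E0) $A=A',B=B',C=C'$ and $d\ne d'$; (E1) $d=d'=0$, $A=A'$, $B=B'$ and $C,C'$ differ in exactly one position; (E2) $d=d'=1$, $A=A'$, $C=C'$ and $B,B'$ differ in exactly one position; (E3) $d=d'=2$, $B=B'$, $C=C'$ and $A,A'$ differ in exactly one position. Paths are internally disjoint if they share no vertices other than their endpoints; length = number of edges. *)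

theory Defs
  imports Main
begin

type_synonym vert = "nat list \<times> nat list \<times> nat list \<times> nat"

definition ternary_strings :: "nat \<Rightarrow> nat list set" where
  "ternary_strings k = {xs. length xs = k \<and> set xs \<subseteq> {0,1,2}}"

definition e3c_verts :: "nat \<Rightarrow> nat \<Rightarrow> nat \<Rightarrow> vert set" where
  "e3c_verts r s t = {(A,B,C,d). A \<in> ternary_strings r \<and> B \<in> ternary_strings s
                              \<and> C \<in> ternary_strings t \<and> d \<in> {0,1,2}}"

definition differ_one :: "nat list \<Rightarrow> nat list \<Rightarrow> bool" where
  "differ_one xs ys \<longleftrightarrow> length xs = length ys \<and> card {i. i < length xs \<and> xs ! i \<noteq> ys ! i} = 1"

definition e3c_adj :: "nat \<Rightarrow> nat \<Rightarrow> nat \<Rightarrow> vert \<Rightarrow> vert \<Rightarrow> bool" where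
  "e3c_adj r s t x y \<longleftrightarrow> x \<in> e3c_verts r s t \<and> y \<in> e3c_verts r s t \<and> x \<noteq> y \<and>
     (case x of (A,B,C,d) \<Rightarrow> case y of (A',B',C',d') \<Rightarrow>
        (A = A' \<and> B = B' \<and> C = C' \<and> d \<noteq> d')
      \<or> (d = 0 \<and> d' = 0 \<and> A = A' \<and> B = B' \<and> differ_one C C')
      \<or> (d = 1 \<and> d' = 1 \<and> A = A' \<and> C = C' \<and> differ_one B B')
      \<or> (d = 2 \<and> d' = 2 \<and> B = B' \<and> C = C' \<and> differ_one A A'))"

definition e3c_path :: "nat \<Rightarrow> nat \<Rightarrow> nat \<Rightarrow> vert \<Rightarrow> vert \<Rightarrow> vert list \<Rightarrow> bool" where
  "e3c_path r s t u v p \<longleftrightarrow> p \<noteq> [] \<and> hd p = u \<and> last p = v \<and> distinct p \<and>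
     (\<forall>i. Suc i < length p \<longrightarrow> e3c_adj r s t (p ! i) (p ! Suc i))"

definition path_len :: "vert list \<Rightarrow> nat" where
  "path_len p = length p - 1"

definition internally_disjoint :: "vert \<Rightarrow> vert \<Rightarrow> vert list \<Rightarrow> vert list \<Rightarrow> bool" where
  "internally_disjoint u v p q \<longleftrightarrow> set p \<inter> set q \<subseteq> {u, v}"

end

theory Submission
  imports Defs
begin

text \<open>
  The A-part of a vertex changes only along E3-edges, i.e. inside one of the copies
  (Z, B'', C'', 2) of the ternary r-cube, where a Hamming path moves A to A' in at most r
  steps. The 2r + 2 paths cross pairwise different copies, reached from u and v by short
  detours through the other layers; writing X^k for the neighbour of X in direction k of the
  first r coordinates (available in all three parts since r \<le> s \<le> t), and fixing one
  direction k0: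

  \<^item> from (A,B,C,0) to (A',B,C,1) they cross the copies (B^k, C^k) for k \<noteq> k0,
    (B, C^k0), (B^k0, C) and (B, C);
  \<^item> from (A,B,C,2) to (A',B,C,0) they cross (B, C^k) starting at A^k for k \<noteq> k0,
    (B, C^k0) and (B^k0, C) starting at A, and (B, C) starting at A^k0. Here k0 is a step
    of A towards A' in a coordinate where they differ, so the Hamming path from A^k0 to A'
    keeps that coordinate and avoids A and all other A^k.

  The remaining four cases follow by reversing paths and by the automorphism that exchanges
  B with C and layer 0 with layer 1.
\<close>

section \<open>Hamming paths\<close>

lemma differ_one_iff:
  "differ_one xs ys \<longleftrightarrow> length xs = length ys \<and>
     (\<exists>i<length xs. xs ! i \<noteq> ys ! i \<and> (\<forall>j<length xs. j \<noteq> i \<longrightarrow> xs ! j = ys ! j))"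
proof -
  have singleton: "{i. i < length xs \<and> xs ! i \<noteq> ys ! i} = {i} \<longleftrightarrow>
      i < length xs \<and> xs ! i \<noteq> ys ! i \<and> (\<forall>j<length xs. j \<noteq> i \<longrightarrow> xs ! j = ys ! j)" for i
    by blast
  show ?thesis
    unfolding differ_one_def card_1_singleton_iff[unfolded One_nat_def[symmetric]] singleton
    by (rule refl)
qed

lemma differ_one_sym: "differ_one xs ys \<Longrightarrow> differ_one ys xs"
  unfolding differ_one_iff by metis

lemma differ_one_imp_neq: "differ_one xs ys \<Longrightarrow> xs \<noteq> ys"
  unfolding differ_one_iff by auto

lemma differ_one_Cons_Cons_same: "differ_one (x # xs) (x # ys) \<longleftrightarrow> differ_one xs ys"
proof -
  have "{i. i < length (x # xs) \<and> (x # xs) ! i \<noteq> (x # ys) ! i} =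
      Suc ` {i. i < length xs \<and> xs ! i \<noteq> ys ! i}"
    by (auto simp: nth_Cons' image_iff gr0_conv_Suc)
  then show ?thesis
    unfolding differ_one_def by (simp add: card_image)
qed

lemma differ_one_Cons_Cons_neq: "x \<noteq> y \<Longrightarrow> differ_one (x # xs) (y # xs)"
  unfolding differ_one_iff by (auto simp: nth_Cons split: nat.splits)

fun hamming_path :: "nat list \<Rightarrow> nat list \<Rightarrow> nat list list" where
  "hamming_path (x # xs) (y # ys) =
     (if x = y then map ((#) x) (hamming_path xs ys)
      else (x # xs) # map ((#) y) (hamming_path xs ys))"
| "hamming_path _ _ = [[]]"

lemma hamming_path_not_Nil: "hamming_path X Y \<noteq> []"
  by (induction X Y rule: hamming_path.induct) auto

lemma hd_hamming_path: "length X = length Y \<Longrightarrow> hd (hamming_path X Y) = X"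
  by (induction X Y rule: hamming_path.induct) (auto simp: hd_map hamming_path_not_Nil)

lemma last_hamming_path: "length X = length Y \<Longrightarrow> last (hamming_path X Y) = Y"
  by (induction X Y rule: hamming_path.induct) (auto simp: last_map hamming_path_not_Nil)

lemma mem_hamming_path_last: "length X = length Y \<Longrightarrow> Y \<in> set (hamming_path X Y)"
  using last_in_set[OF hamming_path_not_Nil] last_hamming_path by metis

lemma length_hamming_path: "length (hamming_path X Y) \<le> length X + 1"
  by (induction X Y rule: hamming_path.induct) auto

lemma distinct_hamming_path: "distinct (hamming_path X Y)"
  by (induction X Y rule: hamming_path.induct) (auto simp: distinct_map)

lemma successively_differ_one_hamming_path:
  "length X = length Y \<Longrightarrow> successively differ_one (hamming_path X Y)"
  by (induction X Y rule: hamming_path.induct)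
    (auto simp: successively_map successively_Cons hd_map hamming_path_not_Nil hd_hamming_path
      differ_one_Cons_Cons_same differ_one_Cons_Cons_neq)

lemma mem_hamming_path_nth:
  "Z \<in> set (hamming_path X Y) \<Longrightarrow> length X = length Y \<Longrightarrow>
     length Z = length X \<and> (\<forall>i<length Z. Z ! i = X ! i \<or> Z ! i = Y ! i)"
proof (induction X Y arbitrary: Z rule: hamming_path.induct)
  case (1 x xs y ys)
  have IH: "length W = length xs \<and> (\<forall>i<length W. W ! i = xs ! i \<or> W ! i = ys ! i)"
    if "W \<in> set (hamming_path xs ys)" for W
    using 1 that by (cases "x = y") auto
  consider "Z = x # xs" | W where "W \<in> set (hamming_path xs ys)" "Z = x # W \<or> Z = y # W"
    using "1.prems"(1) by (auto split: if_splits)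
  then show ?case
  proof cases
    case 1
    then show ?thesis using "1.prems"(2) by (auto simp: nth_Cons split: nat.split)
  next
    case (2 W)
    then show ?thesis using IH[OF 2(1)] by (auto simp: nth_Cons split: nat.split)
  qed
qed auto

lemma hamming_path_ternary:
  assumes "Z \<in> set (hamming_path X Y)" "X \<in> ternary_strings n" "Y \<in> ternary_strings n"
  shows "Z \<in> ternary_strings n"
proof -
  have len: "length X = n" "length Y = n"
    using assms(2,3) unfolding ternary_strings_def by auto
  then have Z: "length Z = n" "\<And>i. i < n \<Longrightarrow> Z ! i = X ! i \<or> Z ! i = Y ! i"
    using mem_hamming_path_nth[OF assms(1)] by auto
  have Zi: "Z ! i \<in> set X \<union> set Y" if "i < n" for i
    using Z(2)[OF that] nth_mem[of i X] nth_mem[of i Y] len that by auto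
  then have "set Z \<subseteq> set X \<union> set Y"
    by (metis Z(1) in_set_conv_nth subsetI)
  then show ?thesis
    using Z(1) assms(2,3) unfolding ternary_strings_def by auto
qed

section \<open>Neighbours in the ternary cube\<close>

text \<open>Index (i, e) with e \<in> {1, 2} names the two neighbours of X in direction i.\<close>

definition nbr :: "nat list \<Rightarrow> nat \<times> nat \<Rightarrow> nat list" where
  "nbr X k = X[fst k := (X ! fst k + snd k) mod 3]"

lemma nbr_Pair: "nbr X (i, e) = X[i := (X ! i + e) mod 3]"
  unfolding nbr_def by simp

definition nbr_indices :: "nat \<Rightarrow> (nat \<times> nat) set" where
  "nbr_indices m = {0..<m} \<times> {1, 2}"

lemma finite_nbr_indices: "finite (nbr_indices m)"
  unfolding nbr_indices_def by simp

lemma card_nbr_indices: "card (nbr_indices m) = 2 * m"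
  unfolding nbr_indices_def by (simp add: card_cartesian_product)

lemma ternary_strings_nth_le: "X \<in> ternary_strings n \<Longrightarrow> i < n \<Longrightarrow> X ! i \<le> 2"
  unfolding ternary_strings_def by (auto dest!: nth_mem)

lemma nbr_ternary:
  "X \<in> ternary_strings n \<Longrightarrow> k \<in> nbr_indices m \<Longrightarrow> m \<le> n \<Longrightarrow> nbr X k \<in> ternary_strings n"
  unfolding ternary_strings_def nbr_indices_def nbr_def
  by (auto dest!: set_update_subset_insert[THEN subsetD])

lemma add_mod_3_neq:
  assumes "a \<le> (2::nat)" "e \<in> {1, 2}"
  shows "(a + e) mod 3 \<noteq> a"
proof -
  have "a = 0 \<or> a = 1 \<or> a = 2" "e = 1 \<or> e = 2" using assms by auto
  then show ?thesis by (elim disjE) simp_all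
qed

lemma differ_one_nbr:
  assumes X: "X \<in> ternary_strings n" and k: "k \<in> nbr_indices m" and "m \<le> n"
  shows "differ_one X (nbr X k)"
proof -
  obtain i e where ie: "k = (i, e)" "i < m" "e \<in> {1, 2}"
    using k unfolding nbr_indices_def by auto
  have "i < length X" using X ie(2) \<open>m \<le> n\<close> unfolding ternary_strings_def by simp
  moreover have "(X ! i + e) mod 3 \<noteq> X ! i"
    using add_mod_3_neq ternary_strings_nth_le[OF X] ie \<open>i < length X\<close> X
    unfolding ternary_strings_def by auto
  ultimately show ?thesis
    unfolding differ_one_iff ie(1) nbr_Pair by auto
qed

lemma add_mod_3_cancel:
  assumes "e \<in> {1, 2}" "e' \<in> {1, 2}" "(a + e) mod 3 = (a + e') mod (3::nat)"
  shows "e = e'"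
  using assms by auto presburger+

lemma nbr_eq_iff:
  assumes X: "X \<in> ternary_strings n" and k: "k \<in> nbr_indices m" and k': "k' \<in> nbr_indices m"
    and "m \<le> n"
  shows "nbr X k = nbr X k' \<longleftrightarrow> k = k'"
proof
  assume eq: "nbr X k = nbr X k'"
  obtain i e i' e' where ie: "k = (i, e)" "k' = (i', e')"
    and ranges: "i < m" "e \<in> {1, 2}" "i' < m" "e' \<in> {1, 2}"
    using k k' unfolding nbr_indices_def by auto
  have "i < length X"
    using X ranges(1) \<open>m \<le> n\<close> unfolding ternary_strings_def by simp
  then have at_i: "nbr X k ! i = (X ! i + e) mod 3"
    "nbr X k' ! i = (if i = i' then (X ! i + e') mod 3 else X ! i)"
    using ie by (auto simp: nbr_Pair)
  have moved: "(X ! i + e) mod 3 \<noteq> X ! i"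
    using add_mod_3_neq ternary_strings_nth_le[OF X] ranges \<open>m \<le> n\<close> by simp
  have "i = i'"
  proof (rule ccontr)
    assume "i \<noteq> i'"
    then show False using at_i eq moved by simp
  qed
  moreover have "e = e'"
    using add_mod_3_cancel[OF ranges(2,4)] at_i eq \<open>i = i'\<close> by simp
  ultimately show "k = k'"
    using ie by simp
qed simp

lemma add_mod_3_onto:
  assumes "a \<le> 2" "b \<le> (2::nat)" "a \<noteq> b"
  obtains e where "e \<in> {1, 2}" "(a + e) mod 3 = b"
proof -
  have "\<exists>e. (e = 1 \<or> e = 2) \<and> (a + e) mod 3 = b"
    using assms by presburger
  then show thesis using that by blast
qed

lemma nbr_toward:
  assumes A: "A \<in> ternary_strings n" and A': "A' \<in> ternary_strings n"
    and i: "i < n" "A ! i \<noteq> A' ! i"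
  obtains e where "(i, e) \<in> nbr_indices n" "nbr A (i, e) = A[i := A' ! i]"
proof -
  obtain e where "e \<in> {1, 2}" "(A ! i + e) mod 3 = A' ! i"
    using add_mod_3_onto ternary_strings_nth_le[OF A i(1)] ternary_strings_nth_le[OF A' i(1)] i(2) .
  moreover have "nbr A (i, e) = A[i := A' ! i]"
    using \<open>(A ! i + e) mod 3 = A' ! i\<close> by (simp add: nbr_Pair)
  ultimately show thesis
    using that[of e] i(1) unfolding nbr_indices_def by simp
qed

lemma hamming_path_from_nbr_avoids_nbrs:
  assumes A: "A \<in> ternary_strings n" and A': "A' \<in> ternary_strings n" and "A \<noteq> A'"
  shows "\<exists>k0 \<in> nbr_indices n. A \<notin> set (hamming_path (nbr A k0) A') \<and>
    (\<forall>k \<in> nbr_indices n - {k0}. nbr A k \<notin> set (hamming_path (nbr A k0) A'))"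
proof -
  have len: "length A = n" "length A' = n"
    using A A' unfolding ternary_strings_def by auto
  obtain i where i: "i < n" "A ! i \<noteq> A' ! i"
    using \<open>A \<noteq> A'\<close> len nth_equalityI by metis
  obtain e where k0: "(i, e) \<in> nbr_indices n" and nbr_k0: "nbr A (i, e) = A[i := A' ! i]"
    using nbr_toward[OF A A' i] .
  have fixed: "Z ! i = A' ! i" if "Z \<in> set (hamming_path (nbr A (i, e)) A')" for Z
    using mem_hamming_path_nth[OF that] nbr_k0 len i(1) by auto
  show ?thesis
  proof (intro bexI[OF _ k0] conjI ballI notI)
    show "A \<in> set (hamming_path (nbr A (i, e)) A') \<Longrightarrow> False"
      using fixed[of A] i(2) by blast
  next
    fix k assume k: "k \<in> nbr_indices n - {(i, e)}"
      and on_path: "nbr A k \<in> set (hamming_path (nbr A (i, e)) A')"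
    obtain j e' where k_eq: "k = (j, e')"
      by (cases k)
    have at_i: "nbr A (j, e') ! i = A' ! i"
      using fixed[OF on_path] k_eq by simp
    have "j = i"
    proof (rule ccontr)
      assume "j \<noteq> i"
      then show False using at_i i(2) by (simp add: nbr_Pair)
    qed
    then have "nbr A k = nbr A (i, e)"
      using at_i k_eq len i(1) nbr_k0 by (simp add: nbr_Pair)
    then show False
      using nbr_eq_iff[OF A _ k0, of k] k by simp
  qed
qed

lemma e3c_adj_sym: "e3c_adj r s t x y \<Longrightarrow> e3c_adj r s t y x"
  unfolding e3c_adj_def by (auto simp: differ_one_sym split: prod.splits)

lemma mem_e3c_verts_iff [simp]:
  "(A, B, C, d) \<in> e3c_verts r s t \<longleftrightarrow>
     A \<in> ternary_strings r \<and> B \<in> ternary_strings s \<and> C \<in> ternary_strings t \<and> d \<in> {0, 1, 2}"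
  unfolding e3c_verts_def by simp

lemma e3c_adj_E0:
  "A \<in> ternary_strings r \<Longrightarrow> B \<in> ternary_strings s \<Longrightarrow> C \<in> ternary_strings t \<Longrightarrow>
     d \<in> {0, 1, 2} \<Longrightarrow> d' \<in> {0, 1, 2} \<Longrightarrow> d \<noteq> d' \<Longrightarrow>
     e3c_adj r s t (A, B, C, d) (A, B, C, d')"
  unfolding e3c_adj_def by simp

lemma e3c_adj_E1:
  "A \<in> ternary_strings r \<Longrightarrow> B \<in> ternary_strings s \<Longrightarrow> C \<in> ternary_strings t \<Longrightarrow>
     C' \<in> ternary_strings t \<Longrightarrow> differ_one C C' \<Longrightarrow> e3c_adj r s t (A, B, C, 0) (A, B, C', 0)"
  unfolding e3c_adj_def using differ_one_imp_neq by simp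

lemma e3c_adj_E2:
  "A \<in> ternary_strings r \<Longrightarrow> B \<in> ternary_strings s \<Longrightarrow> C \<in> ternary_strings t \<Longrightarrow>
     B' \<in> ternary_strings s \<Longrightarrow> differ_one B B' \<Longrightarrow> e3c_adj r s t (A, B, C, 1) (A, B', C, 1)"
  unfolding e3c_adj_def using differ_one_imp_neq by simp

lemma e3c_adj_E3:
  "A \<in> ternary_strings r \<Longrightarrow> B \<in> ternary_strings s \<Longrightarrow> C \<in> ternary_strings t \<Longrightarrow>
     A' \<in> ternary_strings r \<Longrightarrow> differ_one A A' \<Longrightarrow> e3c_adj r s t (A, B, C, 2) (A', B, C, 2)"
  unfolding e3c_adj_def using differ_one_imp_neq by simp

text \<open>The simplifier rewrites the numeral 1 of type nat to Suc 0, so E2 is also needed in that form.\<close>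

lemmas e3c_adj_E2' = e3c_adj_E2[unfolded One_nat_def]

lemma not_e3c_adj_if_A_and_layer_differ:
  "A \<noteq> A' \<Longrightarrow> d \<noteq> d' \<Longrightarrow> \<not> e3c_adj r s t (A, B, C, d) (A', B, C, d')"
  unfolding e3c_adj_def by auto

lemma e3c_path_iff:
  "e3c_path r s t u v p \<longleftrightarrow>
     p \<noteq> [] \<and> hd p = u \<and> last p = v \<and> distinct p \<and> successively (e3c_adj r s t) p"
  unfolding e3c_path_def successively_conv_nth by blast

lemma internally_disjoint_sym:
  "internally_disjoint u v p q \<Longrightarrow> internally_disjoint u v q p"
  unfolding internally_disjoint_def by blast

lemma e3c_adj_if_internally_disjoint_self:
  assumes p: "e3c_path r s t u v p" and "internally_disjoint u v p p" and "u \<noteq> v"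
  shows "e3c_adj r s t u v"
proof -
  have "p \<noteq> []" "hd p = u" "last p = v" "distinct p"
    and adj: "successively (e3c_adj r s t) p"
    using p unfolding e3c_path_iff by auto
  then obtain w p' where p_eq: "p = u # w # p'"
    using \<open>u \<noteq> v\<close> by (metis last_ConsL list.collapse)
  have "w \<in> {u, v}"
    using assms(2) unfolding internally_disjoint_def p_eq by auto
  moreover have "w \<noteq> u"
    using \<open>distinct p\<close> p_eq by auto
  ultimately show ?thesis
    using adj p_eq by simp
qed

definition disjoint_path_family ::
    "nat \<Rightarrow> nat \<Rightarrow> nat \<Rightarrow> vert \<Rightarrow> vert \<Rightarrow> nat \<Rightarrow> vert list set \<Rightarrow> bool" where
  "disjoint_path_family r s t u v L P \<longleftrightarrow> finite P \<and>
     (\<forall>p\<in>P. e3c_path r s t u v p \<and> path_len p \<le> L) \<and>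
     (\<forall>p\<in>P. \<forall>q\<in>P. p \<noteq> q \<longrightarrow> internally_disjoint u v p q)"

lemma disjoint_path_family_image:
  assumes "finite J"
    and paths: "\<And>k. k \<in> J \<Longrightarrow> e3c_path r s t u v (f k)"
    and lens: "\<And>k. k \<in> J \<Longrightarrow> path_len (f k) \<le> L"
    and disj: "\<And>k k'. k \<in> J \<Longrightarrow> k' \<in> J \<Longrightarrow> k \<noteq> k' \<Longrightarrow> internally_disjoint u v (f k) (f k')"
    and far: "\<not> e3c_adj r s t u v" "u \<noteq> v"
  shows "\<exists>P. card P = card J \<and> disjoint_path_family r s t u v L P"
proof (intro exI conjI)
  show "disjoint_path_family r s t u v L (f ` J)"
    unfolding disjoint_path_family_def using assms(1) paths lens disj by fastforce
  have "inj_on f J"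
  proof (rule inj_onI, rule ccontr)
    fix k k' assume "k \<in> J" "k' \<in> J" "f k = f k'" "k \<noteq> k'"
    then show False
      using disj[of k k'] paths[of k] e3c_adj_if_internally_disjoint_self far by metis
  qed
  then show "card (f ` J) = card J"
    by (rule card_image)
qed

lemma disjoint_path_family_rev:
  assumes "\<exists>P. card P = n \<and> disjoint_path_family r s t u v L P"
  shows "\<exists>P. card P = n \<and> disjoint_path_family r s t v u L P"
proof -
  obtain P where "card P = n" and P: "disjoint_path_family r s t u v L P"
    using assms by blast
  moreover have "disjoint_path_family r s t v u L (rev ` P)"
    using P unfolding disjoint_path_family_def e3c_path_iff internally_disjoint_def path_len_def
    by (auto simp: hd_rev last_rev intro: successively_mono e3c_adj_sym)
  ultimately show ?thesis
    by (intro exI[of _ "rev ` P"]) (simp add: card_image)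
qed

definition swap01 :: "nat \<Rightarrow> nat" where
  "swap01 d = (if d = 0 then 1 else if d = 1 then 0 else d)"

fun swap_BC :: "vert \<Rightarrow> vert" where
  "swap_BC (A, B, C, d) = (A, C, B, swap01 d)"

lemma swap_BC_swap_BC: "swap_BC (swap_BC x) = x"
  by (cases x) (simp add: swap01_def)

lemma inj_swap_BC: "inj swap_BC"
  by (metis injI swap_BC_swap_BC)

lemma e3c_adj_swap_BC:
  assumes adj: "e3c_adj r t s x y"
  shows "e3c_adj r s t (swap_BC x) (swap_BC y)"
proof -
  obtain A B C d A' B' C' d' where xy: "x = (A, B, C, d)" "y = (A', B', C', d')"
    by (cases x, cases y) auto
  have "swap_BC x \<noteq> swap_BC y"
    using adj inj_swap_BC unfolding e3c_adj_def by (auto dest: injD)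
  moreover have "swap_BC x \<in> e3c_verts r s t" "swap_BC y \<in> e3c_verts r s t"
    using adj unfolding e3c_adj_def e3c_verts_def xy by (auto simp: swap01_def)
  moreover have "(A = A' \<and> B = B' \<and> C = C' \<and> d \<noteq> d')
      \<or> (d = 0 \<and> d' = 0 \<and> A = A' \<and> B = B' \<and> differ_one C C')
      \<or> (d = 1 \<and> d' = 1 \<and> A = A' \<and> C = C' \<and> differ_one B B')
      \<or> (d = 2 \<and> d' = 2 \<and> B = B' \<and> C = C' \<and> differ_one A A')"
    using adj unfolding e3c_adj_def xy by simp
  then have "(A = A' \<and> C = C' \<and> B = B' \<and> swap01 d \<noteq> swap01 d')
      \<or> (swap01 d = 0 \<and> swap01 d' = 0 \<and> A = A' \<and> C = C' \<and> differ_one B B')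
      \<or> (swap01 d = 1 \<and> swap01 d' = 1 \<and> A = A' \<and> B = B' \<and> differ_one C C')
      \<or> (swap01 d = 2 \<and> swap01 d' = 2 \<and> C = C' \<and> B = B' \<and> differ_one A A')"
    unfolding swap01_def by auto
  ultimately show ?thesis
    unfolding e3c_adj_def xy by simp
qed

lemma disjoint_path_family_map:
  assumes "inj g" and hom: "\<And>x y. e3c_adj r' s' t' x y \<Longrightarrow> e3c_adj r s t (g x) (g y)"
    and "\<exists>P. card P = n \<and> disjoint_path_family r' s' t' u v L P"
  shows "\<exists>P. card P = n \<and> disjoint_path_family r s t (g u) (g v) L P"
proof -
  obtain P where "card P = n" and P: "disjoint_path_family r' s' t' u v L P"
    using assms(3) by blast
  note inj = inj_on_subset[OF \<open>inj g\<close> subset_UNIV]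
  have "e3c_path r s t (g u) (g v) (map g p)" if "e3c_path r' s' t' u v p" for p
    using that unfolding e3c_path_iff
    by (auto simp: hd_map last_map distinct_map successively_map inj
        elim: successively_mono intro: hom)
  moreover have "internally_disjoint (g u) (g v) (map g p) (map g q)"
    if "internally_disjoint u v p q" for p q
    using that image_Int[OF inj, of "set p" "set q"] unfolding internally_disjoint_def by auto
  ultimately have "disjoint_path_family r s t (g u) (g v) L (map g ` P)"
    using P unfolding disjoint_path_family_def path_len_def by fastforce
  moreover have "card (map g ` P) = n"
    using \<open>card P = n\<close> card_image[OF inj_on_subset[OF inj_mapI[OF \<open>inj g\<close>] subset_UNIV]]
    by simp
  ultimately show ?thesis
    by blast
qed

definition cube_path :: "nat list \<Rightarrow> nat list \<Rightarrow> nat list \<Rightarrow> nat list \<Rightarrow> vert list" where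
  "cube_path B C X Y = map (\<lambda>Z. (Z, B, C, 2)) (hamming_path X Y)"

lemma set_cube_path: "set (cube_path B C X Y) = (\<lambda>Z. (Z, B, C, 2)) ` set (hamming_path X Y)"
  unfolding cube_path_def by simp

lemma length_cube_path: "length (cube_path B C X Y) \<le> length X + 1"
  unfolding cube_path_def using length_hamming_path by simp

lemma e3c_path_cube_path:
  assumes X: "X \<in> ternary_strings r" and Y: "Y \<in> ternary_strings r"
    and B: "B \<in> ternary_strings s" and C: "C \<in> ternary_strings t"
  shows "e3c_path r s t (X, B, C, 2) (Y, B, C, 2) (cube_path B C X Y)"
proof -
  have len: "length X = length Y"
    using X Y unfolding ternary_strings_def by simp
  have "successively (\<lambda>Z W. e3c_adj r s t (Z, B, C, 2) (W, B, C, 2)) (hamming_path X Y)"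
    using successively_differ_one_hamming_path[OF len]
    by (rule successively_mono) (use hamming_path_ternary X Y B C e3c_adj_E3 in blast)
  then show ?thesis
    unfolding e3c_path_iff cube_path_def
    by (simp add: hamming_path_not_Nil hd_map last_map hd_hamming_path[OF len]
        last_hamming_path[OF len] distinct_map distinct_hamming_path inj_on_def successively_map)
qed

lemma e3c_path_through_cube:
  assumes X: "X \<in> ternary_strings r" and Y: "Y \<in> ternary_strings r"
    and B: "B \<in> ternary_strings s" and C: "C \<in> ternary_strings t"
    and xs: "xs \<noteq> []" "hd xs = u" "successively (e3c_adj r s t) xs"
      "e3c_adj r s t (last xs) (X, B, C, 2)"
    and ys: "ys \<noteq> []" "last ys = v" "successively (e3c_adj r s t) ys"
      "e3c_adj r s t (Y, B, C, 2) (hd ys)"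
    and "distinct (xs @ ys)" and "set (xs @ ys) \<inter> set (cube_path B C X Y) = {}"
  shows "e3c_path r s t u v (xs @ cube_path B C X Y @ ys)"
  using e3c_path_cube_path[OF X Y B C] assms(5-)
  unfolding e3c_path_iff by (auto simp: successively_append_iff)

lemma path_len_through_cube:
  "path_len (xs @ cube_path B C X Y @ ys) \<le> length xs + length ys + length X"
  using length_cube_path[of B C X Y] unfolding path_len_def by simp

section \<open>From layer 2 to layer 0\<close>

locale e3c_far_pair =
  fixes r s t :: nat and A A' B C :: "nat list"
  assumes r_pos: "1 \<le> r" and r_le_s: "r \<le> s" and r_le_t: "r \<le> t"
    and A: "A \<in> ternary_strings r" and A': "A' \<in> ternary_strings r"
    and B: "B \<in> ternary_strings s" and C: "C \<in> ternary_strings t"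
    and A_neq: "A \<noteq> A'"
begin

lemma length_A: "length A = r"
  using A unfolding ternary_strings_def by simp

lemma nonadjacent: "\<not> e3c_adj r s t (A, B, C, d) (A', B, C, d')" if "d \<noteq> d'"
  using not_e3c_adj_if_A_and_layer_differ[OF A_neq that] .

lemma
  assumes "k \<in> nbr_indices r"
  shows nbr_A: "nbr A k \<in> ternary_strings r" "differ_one A (nbr A k)" "differ_one (nbr A k) A"
    and nbr_B: "nbr B k \<in> ternary_strings s" "differ_one B (nbr B k)" "differ_one (nbr B k) B"
    and nbr_C: "nbr C k \<in> ternary_strings t" "differ_one C (nbr C k)" "differ_one (nbr C k) C"
  using assms A B C r_le_s r_le_t
  by (auto intro: nbr_ternary differ_one_nbr differ_one_sym)

lemma
  assumes "k \<in> nbr_indices r" "k' \<in> nbr_indices r"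
  shows nbr_A_eq_iff: "nbr A k = nbr A k' \<longleftrightarrow> k = k'"
    and nbr_B_eq_iff: "nbr B k = nbr B k' \<longleftrightarrow> k = k'"
    and nbr_C_eq_iff: "nbr C k = nbr C k' \<longleftrightarrow> k = k'"
  using assms A B C r_le_s r_le_t by (auto simp: nbr_eq_iff)

lemma nbr_neq:
  assumes "k \<in> nbr_indices r"
  shows "nbr A k \<noteq> A" "nbr B k \<noteq> B" "nbr C k \<noteq> C"
  using nbr_A(2)[OF assms] nbr_B(2)[OF assms] nbr_C(2)[OF assms] differ_one_imp_neq by metis+

lemma zero_one_in_nbr_indices: "(0, 1) \<in> nbr_indices r"
  using r_pos unfolding nbr_indices_def by simp

definition path_20_shift :: "nat \<times> nat \<Rightarrow> vert list" where
  "path_20_shift k =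
     [(A, B, C, 2), (nbr A k, B, C, 2), (nbr A k, B, C, 0), (nbr A k, B, nbr C k, 0)] @
     cube_path B (nbr C k) (nbr A k) A' @ [(A', B, nbr C k, 0), (A', B, C, 0)]"

definition path_20_layer0 :: "nat \<times> nat \<Rightarrow> vert list" where
  "path_20_layer0 k =
     [(A, B, C, 2), (A, B, C, 0), (A, B, nbr C k, 0)] @
     cube_path B (nbr C k) A A' @ [(A', B, nbr C k, 0), (A', B, C, 0)]"

definition path_20_layer1 :: "nat \<times> nat \<Rightarrow> vert list" where
  "path_20_layer1 k =
     [(A, B, C, 2), (A, B, C, 1), (A, nbr B k, C, 1)] @
     cube_path (nbr B k) C A A' @ [(A', nbr B k, C, 1), (A', B, C, 1), (A', B, C, 0)]"

definition path_20_direct :: "nat \<times> nat \<Rightarrow> vert list" where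
  "path_20_direct k = [(A, B, C, 2)] @ cube_path B C (nbr A k) A' @ [(A', B, C, 0)]"

lemma e3c_path_20_shift:
  assumes k: "k \<in> nbr_indices r" and "nbr A k \<noteq> A'"
  shows "e3c_path r s t (A, B, C, 2) (A', B, C, 0) (path_20_shift k)"
  unfolding path_20_shift_def
  by (rule e3c_path_through_cube[OF nbr_A(1)[OF k] A' B nbr_C(1)[OF k]])
    (use assms nbr_A[OF k] nbr_C[OF k] nbr_neq[OF k] A A' B C A_neq in
      \<open>auto simp: e3c_adj_E0 e3c_adj_E1 e3c_adj_E3 set_cube_path\<close>)

lemma e3c_path_20_layer0:
  assumes k: "k \<in> nbr_indices r"
  shows "e3c_path r s t (A, B, C, 2) (A', B, C, 0) (path_20_layer0 k)"
  unfolding path_20_layer0_def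
  by (rule e3c_path_through_cube[OF A A' B nbr_C(1)[OF k]])
    (use assms nbr_C[OF k] nbr_neq[OF k] A A' B C A_neq in
      \<open>auto simp: e3c_adj_E0 e3c_adj_E1 set_cube_path\<close>)

lemma e3c_path_20_layer1:
  assumes k: "k \<in> nbr_indices r"
  shows "e3c_path r s t (A, B, C, 2) (A', B, C, 0) (path_20_layer1 k)"
  unfolding path_20_layer1_def
  by (rule e3c_path_through_cube[OF A A' nbr_B(1)[OF k] C])
    (use nbr_B[OF k] nbr_neq[OF k] A A' B C A_neq in
      \<open>auto simp: e3c_adj_E0 e3c_adj_E2 e3c_adj_E2' set_cube_path\<close>)

lemma e3c_path_20_direct:
  assumes k: "k \<in> nbr_indices r" and "A \<notin> set (hamming_path (nbr A k) A')"
  shows "e3c_path r s t (A, B, C, 2) (A', B, C, 0) (path_20_direct k)"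
  unfolding path_20_direct_def
  by (rule e3c_path_through_cube[OF nbr_A(1)[OF k] A' B C])
    (use assms nbr_A[OF k] A A' B C in \<open>auto simp: e3c_adj_E0 e3c_adj_E3 set_cube_path\<close>)

lemma path_len_20:
  assumes "k \<in> nbr_indices r"
  shows "path_len (path_20_shift k) \<le> r + 6" "path_len (path_20_layer0 k) \<le> r + 6"
    "path_len (path_20_layer1 k) \<le> r + 6" "path_len (path_20_direct k) \<le> r + 6"
  unfolding path_20_shift_def path_20_layer0_def path_20_layer1_def path_20_direct_def
  by (rule order_trans[OF path_len_through_cube],
      use nbr_A(1)[OF assms] length_A in \<open>simp add: ternary_strings_def\<close>)+

lemma internally_disjoint_20_shift_shift:
  assumes "k \<in> nbr_indices r" "k' \<in> nbr_indices r" "k \<noteq> k'"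
  shows "internally_disjoint (A, B, C, 2) (A', B, C, 0) (path_20_shift k) (path_20_shift k')"
  using assms nbr_A_eq_iff[of k k'] nbr_C_eq_iff[of k k'] nbr_neq[OF assms(1)]
    nbr_neq[OF assms(2)] A_neq
  unfolding internally_disjoint_def path_20_shift_def by (auto simp: set_cube_path)

lemma internally_disjoint_20_shift_layer0:
  assumes "k \<in> nbr_indices r" "k' \<in> nbr_indices r" "k \<noteq> k'"
  shows "internally_disjoint (A, B, C, 2) (A', B, C, 0) (path_20_shift k) (path_20_layer0 k')"
  using assms nbr_A_eq_iff[of k k'] nbr_C_eq_iff[of k k'] nbr_neq[OF assms(1)]
    nbr_neq[OF assms(2)] A_neq
  unfolding internally_disjoint_def path_20_shift_def path_20_layer0_def
  by (auto simp: set_cube_path)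

lemma internally_disjoint_20_shift_layer1:
  assumes "k \<in> nbr_indices r" "k' \<in> nbr_indices r"
  shows "internally_disjoint (A, B, C, 2) (A', B, C, 0) (path_20_shift k) (path_20_layer1 k')"
  using nbr_neq[OF assms(1)] nbr_neq[OF assms(2)] A_neq
  unfolding internally_disjoint_def path_20_shift_def path_20_layer1_def
  by (auto simp: set_cube_path)

lemma internally_disjoint_20_shift_direct:
  assumes "k \<in> nbr_indices r" "nbr A k \<notin> set (hamming_path (nbr A k0) A')"
  shows "internally_disjoint (A, B, C, 2) (A', B, C, 0) (path_20_shift k) (path_20_direct k0)"
  using assms nbr_neq[OF assms(1)] A_neq
  unfolding internally_disjoint_def path_20_shift_def path_20_direct_def
  by (auto simp: set_cube_path)

lemma internally_disjoint_20_layer0_layer1: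
  assumes "k \<in> nbr_indices r" "k' \<in> nbr_indices r"
  shows "internally_disjoint (A, B, C, 2) (A', B, C, 0) (path_20_layer0 k) (path_20_layer1 k')"
  using nbr_neq[OF assms(1)] nbr_neq[OF assms(2)] A_neq
  unfolding internally_disjoint_def path_20_layer0_def path_20_layer1_def
  by (auto simp: set_cube_path)

lemma internally_disjoint_20_layer0_direct:
  assumes "k \<in> nbr_indices r"
  shows "internally_disjoint (A, B, C, 2) (A', B, C, 0) (path_20_layer0 k) (path_20_direct k0)"
  using nbr_neq[OF assms] A_neq
  unfolding internally_disjoint_def path_20_layer0_def path_20_direct_def
  by (auto simp: set_cube_path)

lemma internally_disjoint_20_layer1_direct:
  assumes "k \<in> nbr_indices r"
  shows "internally_disjoint (A, B, C, 2) (A', B, C, 0) (path_20_layer1 k) (path_20_direct k0)"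
  using nbr_neq[OF assms] A_neq
  unfolding internally_disjoint_def path_20_layer1_def path_20_direct_def
  by (auto simp: set_cube_path)

lemmas internally_disjoint_20 = internally_disjoint_20_shift_shift
  internally_disjoint_20_shift_layer0 internally_disjoint_20_shift_layer1
  internally_disjoint_20_shift_direct internally_disjoint_20_layer0_layer1
  internally_disjoint_20_layer0_direct internally_disjoint_20_layer1_direct

lemma disjoint_paths_20:
  "\<exists>P. card P = 2 * r + 2 \<and> disjoint_path_family r s t (A, B, C, 2) (A', B, C, 0) (r + 6) P"
proof -
  obtain k0 where k0: "k0 \<in> nbr_indices r" and avoids: "A \<notin> set (hamming_path (nbr A k0) A') \<and>
      (\<forall>k \<in> nbr_indices r - {k0}. nbr A k \<notin> set (hamming_path (nbr A k0) A'))"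
    using hamming_path_from_nbr_avoids_nbrs[OF A A' A_neq] ..
  define J where "J = nbr_indices r - {k0}"
  have "A' \<in> set (hamming_path (nbr A k0) A')"
    using mem_hamming_path_last nbr_A(1)[OF k0] A' unfolding ternary_strings_def by simp
  then have J: "k \<in> nbr_indices r" "k \<noteq> k0" "nbr A k \<notin> set (hamming_path (nbr A k0) A')"
    "nbr A k \<noteq> A'" if "k \<in> J" for k
    using that avoids unfolding J_def by auto
  have "finite J" "card J + 3 = 2 * r + 2"
    using k0 r_pos unfolding J_def by (simp_all add: finite_nbr_indices card_nbr_indices)
  define f where "f = case_sum path_20_shift
    (\<lambda>i. [path_20_layer0 k0, path_20_layer1 k0, path_20_direct k0] ! i)"
  define I :: "(nat \<times> nat + nat) set" where "I = Inl ` J \<union> Inr ` {0, 1, 2}"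
  have "finite I"
    using \<open>finite J\<close> unfolding I_def by simp
  have card_I: "card I = 2 * r + 2"
    using \<open>finite J\<close> \<open>card J + 3 = 2 * r + 2\<close> unfolding I_def
    by (subst card_Un_disjoint) (auto simp: card_image)
  show ?thesis
    unfolding card_I[symmetric]
  proof (rule disjoint_path_family_image[OF \<open>finite I\<close>])
    show "e3c_path r s t (A, B, C, 2) (A', B, C, 0) (f i)" if "i \<in> I" for i
      using that unfolding I_def
      by (elim UnE imageE insertE emptyE)
        (simp_all add: f_def J k0 avoids e3c_path_20_shift e3c_path_20_layer0
          e3c_path_20_layer1 e3c_path_20_direct)
    show "path_len (f i) \<le> r + 6" if "i \<in> I" for i
      using that unfolding I_def
      by (elim UnE imageE insertE emptyE) (simp_all add: f_def J k0 path_len_20)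
    show "internally_disjoint (A, B, C, 2) (A', B, C, 0) (f i) (f i')"
      if "i \<in> I" "i' \<in> I" "i \<noteq> i'" for i i'
      using that unfolding I_def
      by (elim UnE imageE insertE emptyE)
        (simp_all add: f_def J k0 internally_disjoint_20
          internally_disjoint_20[THEN internally_disjoint_sym])
  qed (use nonadjacent in auto)
qed

section \<open>From layer 0 to layer 1\<close>

definition path_01_direct :: "vert list" where
  "path_01_direct = [(A, B, C, 0)] @ cube_path B C A A' @ [(A', B, C, 1)]"

definition path_01_shift :: "nat \<times> nat \<Rightarrow> vert list" where
  "path_01_shift k =
     [(A, B, C, 0), (A, B, nbr C k, 0), (A, B, nbr C k, 1), (A, nbr B k, nbr C k, 1)] @
     cube_path (nbr B k) (nbr C k) A A' @
     [(A', nbr B k, nbr C k, 0), (A', nbr B k, C, 0), (A', nbr B k, C, 1), (A', B, C, 1)]"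

definition path_01_layer0 :: "nat \<times> nat \<Rightarrow> vert list" where
  "path_01_layer0 k =
     [(A, B, C, 0), (A, B, nbr C k, 0)] @
     cube_path B (nbr C k) A A' @ [(A', B, nbr C k, 0), (A', B, C, 0), (A', B, C, 1)]"

definition path_01_layer1 :: "nat \<times> nat \<Rightarrow> vert list" where
  "path_01_layer1 k =
     [(A, B, C, 0), (A, B, C, 1), (A, nbr B k, C, 1)] @
     cube_path (nbr B k) C A A' @ [(A', nbr B k, C, 1), (A', B, C, 1)]"

lemma e3c_path_01_direct: "e3c_path r s t (A, B, C, 0) (A', B, C, 1) path_01_direct"
  unfolding path_01_direct_def
  by (rule e3c_path_through_cube[OF A A' B C])
    (use A A' B C A_neq in \<open>auto simp: e3c_adj_E0 set_cube_path\<close>)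

lemma e3c_path_01_shift:
  assumes k: "k \<in> nbr_indices r"
  shows "e3c_path r s t (A, B, C, 0) (A', B, C, 1) (path_01_shift k)"
  unfolding path_01_shift_def
  by (rule e3c_path_through_cube[OF A A' nbr_B(1)[OF k] nbr_C(1)[OF k]])
    (use nbr_B[OF k] nbr_C[OF k] nbr_neq[OF k] A A' B C A_neq in
      \<open>auto simp: e3c_adj_E0 e3c_adj_E1 e3c_adj_E2 e3c_adj_E2' set_cube_path\<close>)

lemma e3c_path_01_layer0:
  assumes k: "k \<in> nbr_indices r"
  shows "e3c_path r s t (A, B, C, 0) (A', B, C, 1) (path_01_layer0 k)"
  unfolding path_01_layer0_def
  by (rule e3c_path_through_cube[OF A A' B nbr_C(1)[OF k]])
    (use nbr_C[OF k] nbr_neq[OF k] A A' B C A_neq in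
      \<open>auto simp: e3c_adj_E0 e3c_adj_E1 set_cube_path\<close>)

lemma e3c_path_01_layer1:
  assumes k: "k \<in> nbr_indices r"
  shows "e3c_path r s t (A, B, C, 0) (A', B, C, 1) (path_01_layer1 k)"
  unfolding path_01_layer1_def
  by (rule e3c_path_through_cube[OF A A' nbr_B(1)[OF k] C])
    (use nbr_B[OF k] nbr_neq[OF k] A A' B C A_neq in
      \<open>auto simp: e3c_adj_E0 e3c_adj_E2 e3c_adj_E2' set_cube_path\<close>)

lemma path_len_01:
  shows "path_len path_01_direct \<le> r + 8" "path_len (path_01_shift k) \<le> r + 8"
    "path_len (path_01_layer0 k) \<le> r + 8" "path_len (path_01_layer1 k) \<le> r + 8"
  unfolding path_01_direct_def path_01_shift_def path_01_layer0_def path_01_layer1_def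
  by (rule order_trans[OF path_len_through_cube], simp add: length_A)+

lemma internally_disjoint_01_direct_shift:
  assumes "k \<in> nbr_indices r"
  shows "internally_disjoint (A, B, C, 0) (A', B, C, 1) path_01_direct (path_01_shift k)"
  using nbr_neq[OF assms] A_neq
  unfolding internally_disjoint_def path_01_direct_def path_01_shift_def
  by (auto simp: set_cube_path)

lemma internally_disjoint_01_direct_layer0:
  assumes "k \<in> nbr_indices r"
  shows "internally_disjoint (A, B, C, 0) (A', B, C, 1) path_01_direct (path_01_layer0 k)"
  using nbr_neq[OF assms] A_neq
  unfolding internally_disjoint_def path_01_direct_def path_01_layer0_def
  by (auto simp: set_cube_path)

lemma internally_disjoint_01_direct_layer1:
  assumes "k \<in> nbr_indices r"
  shows "internally_disjoint (A, B, C, 0) (A', B, C, 1) path_01_direct (path_01_layer1 k)"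
  using nbr_neq[OF assms] A_neq
  unfolding internally_disjoint_def path_01_direct_def path_01_layer1_def
  by (auto simp: set_cube_path)

lemma internally_disjoint_01_shift_shift:
  assumes "k \<in> nbr_indices r" "k' \<in> nbr_indices r" "k \<noteq> k'"
  shows "internally_disjoint (A, B, C, 0) (A', B, C, 1) (path_01_shift k) (path_01_shift k')"
  using assms nbr_B_eq_iff[of k k'] nbr_C_eq_iff[of k k'] nbr_neq[OF assms(1)] nbr_neq[OF assms(2)]
    A_neq
  unfolding internally_disjoint_def path_01_shift_def by (auto simp: set_cube_path)

lemma internally_disjoint_01_shift_layer0:
  assumes "k \<in> nbr_indices r" "k' \<in> nbr_indices r" "k \<noteq> k'"
  shows "internally_disjoint (A, B, C, 0) (A', B, C, 1) (path_01_shift k) (path_01_layer0 k')"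
  using assms nbr_C_eq_iff[of k k'] nbr_neq[OF assms(1)] nbr_neq[OF assms(2)] A_neq
  unfolding internally_disjoint_def path_01_shift_def path_01_layer0_def
  by (auto simp: set_cube_path)

lemma internally_disjoint_01_shift_layer1:
  assumes "k \<in> nbr_indices r" "k' \<in> nbr_indices r" "k \<noteq> k'"
  shows "internally_disjoint (A, B, C, 0) (A', B, C, 1) (path_01_shift k) (path_01_layer1 k')"
  using assms nbr_B_eq_iff[of k k'] nbr_neq[OF assms(1)] nbr_neq[OF assms(2)] A_neq
  unfolding internally_disjoint_def path_01_shift_def path_01_layer1_def
  by (auto simp: set_cube_path)

lemma internally_disjoint_01_layer0_layer1:
  assumes "k \<in> nbr_indices r"
  shows "internally_disjoint (A, B, C, 0) (A', B, C, 1) (path_01_layer0 k) (path_01_layer1 k)"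
  using nbr_neq[OF assms] A_neq
  unfolding internally_disjoint_def path_01_layer0_def path_01_layer1_def
  by (auto simp: set_cube_path)

lemmas internally_disjoint_01 = internally_disjoint_01_direct_shift
  internally_disjoint_01_direct_layer0 internally_disjoint_01_direct_layer1
  internally_disjoint_01_shift_shift internally_disjoint_01_shift_layer0
  internally_disjoint_01_shift_layer1 internally_disjoint_01_layer0_layer1

lemma disjoint_paths_01:
  "\<exists>P. card P = 2 * r + 2 \<and> disjoint_path_family r s t (A, B, C, 0) (A', B, C, 1) (r + 8) P"
proof -
  define J where "J = nbr_indices r - {(0, 1)}"
  have J: "k \<in> nbr_indices r" "k \<noteq> (0, 1)" if "k \<in> J" for k
    using that unfolding J_def by auto
  define f where "f = case_sum path_01_shift
    (\<lambda>i. [path_01_layer0 (0, 1), path_01_layer1 (0, 1), path_01_direct] ! i)"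
  define I :: "(nat \<times> nat + nat) set" where "I = Inl ` J \<union> Inr ` {0, 1, 2}"
  have "finite I"
    unfolding I_def J_def by (simp add: finite_nbr_indices)
  have card_I: "card I = 2 * r + 2"
    using zero_one_in_nbr_indices r_pos unfolding I_def J_def
    by (subst card_Un_disjoint) (auto simp: card_image finite_nbr_indices card_nbr_indices)
  show ?thesis
    unfolding card_I[symmetric]
  proof (rule disjoint_path_family_image[OF \<open>finite I\<close>])
    show "e3c_path r s t (A, B, C, 0) (A', B, C, 1) (f i)" if "i \<in> I" for i
      using that unfolding I_def
      by (elim UnE imageE insertE emptyE)
        (simp_all add: f_def J zero_one_in_nbr_indices e3c_path_01_direct e3c_path_01_shift e3c_path_01_layer0
          e3c_path_01_layer1 del: One_nat_def)
    show "path_len (f i) \<le> r + 8" if "i \<in> I" for i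
      using that unfolding I_def
      by (elim UnE imageE insertE emptyE) (simp_all add: f_def path_len_01)
    show "internally_disjoint (A, B, C, 0) (A', B, C, 1) (f i) (f i')"
      if "i \<in> I" "i' \<in> I" "i \<noteq> i'" for i i'
      using that unfolding I_def
      by (elim UnE imageE insertE emptyE)
        (simp_all add: f_def J zero_one_in_nbr_indices internally_disjoint_01
          internally_disjoint_01[THEN internally_disjoint_sym] del: One_nat_def)
  qed (use nonadjacent in auto)
qed


section \<open>All pairs of layers\<close>

lemma e3c_far_pair_flip: "e3c_far_pair r s t A' A B C"
  using r_pos r_le_s r_le_t A A' B C A_neq by unfold_locales auto

lemma e3c_far_pair_swap: "e3c_far_pair r t s A A' C B"
  using r_pos r_le_s r_le_t A A' B C A_neq by unfold_locales auto

lemma disjoint_paths_descending: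
  assumes "d' < d" "d \<le> 2"
  shows "\<exists>P. card P = 2 * r + 2 \<and> disjoint_path_family r s t (A, B, C, d) (A', B, C, d')
    (if {d, d'} = {0, 1} then r + 8 else r + 6) P"
proof -
  consider "d = 1" "d' = 0" | "d = 2" "d' = 0" | "d = 2" "d' = 1"
    using assms by linarith
  then show ?thesis
  proof cases
    case 1
    then show ?thesis
      using disjoint_path_family_rev[OF e3c_far_pair.disjoint_paths_01[OF e3c_far_pair_flip]]
      by (simp add: insert_commute)
  next
    case 2
    then show ?thesis
      using disjoint_paths_20 by (simp add: doubleton_eq_iff)
  next
    case 3
    then show ?thesis
      using disjoint_path_family_map[OF inj_swap_BC e3c_adj_swap_BC
          e3c_far_pair.disjoint_paths_20[OF e3c_far_pair_swap]]
      by (simp add: swap01_def doubleton_eq_iff)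
  qed
qed

lemma disjoint_paths:
  assumes "d \<in> {0, 1, 2}" "d' \<in> {0, 1, 2}" "d \<noteq> d'"
  shows "\<exists>P. card P = 2 * r + 2 \<and> disjoint_path_family r s t (A, B, C, d) (A', B, C, d')
    (if {d, d'} = {0, 1} then r + 8 else r + 6) P"
proof (cases "d' < d")
  case True
  moreover have "d \<le> 2"
    using assms(1) by auto
  ultimately show ?thesis
    by (rule disjoint_paths_descending)
next
  case False
  then have "d < d'" "d' \<le> 2"
    using assms by auto
  from e3c_far_pair.disjoint_paths_descending[OF e3c_far_pair_flip this]
  show ?thesis
    unfolding insert_commute[of d' d] by (rule disjoint_path_family_rev)
qed

end

theorem lemma18:
  fixes r s t :: nat and A B C A' B' C' :: "nat list" and d d' :: nat
  assumes "1 \<le> r" and "r \<le> s" and "s \<le> t"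
    and "(A,B,C,d) \<in> e3c_verts r s t" and "(A',B',C',d') \<in> e3c_verts r s t"
    and "A \<noteq> A'" and "B = B'" and "C = C'" and "d \<noteq> d'"
  shows "\<exists>P :: vert list set.
           card P = 2 * r + 2 \<and>
           (\<forall>p\<in>P. e3c_path r s t (A,B,C,d) (A',B',C',d') p) \<and>
           (\<forall>p\<in>P. \<forall>q\<in>P. p \<noteq> q \<longrightarrow> internally_disjoint (A,B,C,d) (A',B',C',d') p q) \<and>
           ({d,d'} = {0,1} \<longrightarrow> (\<forall>p\<in>P. path_len p \<le> r + 8)) \<and>
           (({d,d'} = {0,2} \<or> {d,d'} = {1,2}) \<longrightarrow> (\<forall>p\<in>P. path_len p \<le> r + 6))"
proof -
  have "e3c_far_pair r s t A A' B C"
    using assms by unfold_locales auto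
  then obtain P where "card P = 2 * r + 2"
    and P: "disjoint_path_family r s t (A, B, C, d) (A', B, C, d')
      (if {d, d'} = {0, 1} then r + 8 else r + 6) P"
    using e3c_far_pair.disjoint_paths[of r s t A A' B C d d'] assms by auto
  moreover have "{d, d'} \<noteq> {0, 1}" if "{d, d'} = {0, 2} \<or> {d, d'} = {1, 2}"
    using that by (auto simp: doubleton_eq_iff)
  ultimately show ?thesis
    unfolding disjoint_path_family_def assms(7,8)[symmetric]
    by (intro exI[of _ P]) (auto split: if_splits)
qed

end
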